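(* Let $(\mathbb{S},\Sigma)$ be a measurable space, let $\{\mu_n\}_{n=1,2,\ldots}$ be a sequence of finite measures on $(\mathbb{S},\Sigma)$, and let $\{f_n\}_{n=1,2,\ldots}$ be a sequence of measurable $[-\infty,+\infty]$-valued functions on $\mathbb{S}$. Then there exists $N\in\{0,1,2,\ldots\}$ such that $\{f_{n+N}\}_{n=1,2,\ldots}$ is uniformly integrable with respect to $\{\mu_{n+N}\}_{n=1,2,\ldots}$ if and only if $\{f_n\}_{n=1,2,\ldots}$ is asymptotically uniformly integrable with respect to $\{\mu_n\}_{n=1,2,\ldots}$.
   Context: A sequence of measurable $[-\infty,+\infty]$-valued functions $\{f_n\}$ is uniformly integrable (u.i.) with respect to a sequence of finite measures $\{\mu_n\}$ if $\lim_{K\to+\infty}\sup_{n=1,2,\ldots}\int_{\mathbb{S}}|f_n(s)|\,\mathbf{1}\{s: |f_n(s)|\ge K\}\,\mu_n(ds)=0$, and asymptotically uniformly integrable (a.u.i.) with respect to $\{\mu_n\}$ if $\lim_{K\to+\infty}\limsup_{n\to\infty}\int_{\mathbb{S}}|f_n(s)|\,\mathbf{1}\{s: |f_n(s)|\ge K\}\,\mu_n(ds)=0$. *)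

theory Defs
  imports "HOL-Analysis.Analysis"
begin

text \<open>Sequences are indexed from 0 in Isabelle: index n here corresponds to n+1 in the paper.\<close>

definition tail_integral ::
  "(nat \<Rightarrow> 'a measure) \<Rightarrow> (nat \<Rightarrow> 'a \<Rightarrow> ereal) \<Rightarrow> nat \<Rightarrow> real \<Rightarrow> ennreal" where
  "tail_integral \<mu> f n K =
     (\<integral>\<^sup>+ s. e2ennreal \<bar>f n s\<bar> * indicator {s. ereal K \<le> \<bar>f n s\<bar>} s \<partial>(\<mu> n))"

definition unif_integrable ::
  "(nat \<Rightarrow> 'a measure) \<Rightarrow> (nat \<Rightarrow> 'a \<Rightarrow> ereal) \<Rightarrow> bool" where
  "unif_integrable \<mu> f \<longleftrightarrow>
     ((\<lambda>K::real. SUP n. tail_integral \<mu> f n K) \<longlongrightarrow> 0) at_top"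

definition asymp_unif_integrable ::
  "(nat \<Rightarrow> 'a measure) \<Rightarrow> (nat \<Rightarrow> 'a \<Rightarrow> ereal) \<Rightarrow> bool" where
  "asymp_unif_integrable \<mu> f \<longleftrightarrow>
     ((\<lambda>K::real. limsup (\<lambda>n. tail_integral \<mu> f n K)) \<longlongrightarrow> 0) at_top"

end

theory Submission
  imports Defs
begin

text \<open>Asymptotic uniform integrability controls only the limsup over n of the tail
integrals, uniform integrability of a tail their supremum, and the two differ by finitely
many indices. If the limsup tends to 0, the tail integrals at some level K0 are finite from
some index N on; for a single index, a tail integral that is finite at one level tends to 0
as the level grows, because |f n| is then a.e. finite and dominated convergence applies.
So past the index M where the limsup bound takes over, and for each of the finitely many
indices in [N, M) separately, the tail integrals become small.\<close>

lemma tail_integral_antimono: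
  assumes "K \<le> K'"
  shows "tail_integral \<mu> f n K' \<le> tail_integral \<mu> f n K"
  unfolding tail_integral_def
  using order_trans[of "ereal K" "ereal K'"] assms
  by (intro nn_integral_mono) (auto simp: indicator_def)

lemma tail_integral_shift:
  "tail_integral (\<lambda>n. \<mu> (n + N)) (\<lambda>n. f (n + N)) n K = tail_integral \<mu> f (n + N) K"
  by (simp add: tail_integral_def)

lemma tail_integral_tendsto_0:
  assumes meas: "f n \<in> borel_measurable (\<mu> n)"
    and fin: "tail_integral \<mu> f n K\<^sub>0 < \<infinity>"
  shows "((\<lambda>K. tail_integral \<mu> f n K) \<longlongrightarrow> 0) at_top"
proof (rule tendsto_at_topI_sequentially)
  define h where "h K s = e2ennreal \<bar>f n s\<bar> * indicator {s. ereal K \<le> \<bar>f n s\<bar>} s" for K s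
  have h_meas: "h K \<in> borel_measurable (\<mu> n)" for K
    unfolding h_def using meas by measurable
  have tail_h: "tail_integral \<mu> f n K = (\<integral>\<^sup>+ s. h K s \<partial>\<mu> n)" for K
    by (simp add: h_def tail_integral_def)
  have h_antimono: "h K' s \<le> h K s" if "K \<le> K'" for K K' s
    using order_trans[of "ereal K" "ereal K'"] that by (auto simp: h_def indicator_def)
  have "AE s in \<mu> n. h K\<^sub>0 s \<noteq> \<infinity>"
    using fin h_meas by (intro nn_integral_PInf_AE) (auto simp: tail_h)
  then have f_finite: "AE s in \<mu> n. \<bar>f n s\<bar> \<noteq> \<infinity>"
    by eventually_elim (auto simp: h_def)
  fix X :: "nat \<Rightarrow> real"
  assume X: "filterlim X at_top sequentially"
  \<comment> \<open>Raising the levels X i to at least K0 makes h K0 a dominating function.\<close>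
  have "(\<lambda>i. \<integral>\<^sup>+ s. h (max K\<^sub>0 (X i)) s \<partial>\<mu> n) \<longlonglongrightarrow> (\<integral>\<^sup>+ s. 0 \<partial>\<mu> n)"
  proof (rule nn_integral_dominated_convergence[where w = "h K\<^sub>0"])
    show "(\<integral>\<^sup>+ s. h K\<^sub>0 s \<partial>\<mu> n) < \<infinity>"
      using fin by (simp add: tail_h)
    show "AE s in \<mu> n. (\<lambda>i. h (max K\<^sub>0 (X i)) s) \<longlonglongrightarrow> 0"
      using f_finite
    proof eventually_elim
      case (elim s)
      then obtain r where r: "\<bar>f n s\<bar> = ereal r" by (cases "f n s") auto
      have "eventually (\<lambda>i. r < X i) sequentially"
        using X by (simp add: filterlim_at_top_dense)
      then have "eventually (\<lambda>i. h (max K\<^sub>0 (X i)) s = 0) sequentially"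
        by eventually_elim (auto simp: h_def r indicator_def)
      then show ?case by (rule tendsto_eventually)
    qed
  qed (auto simp: h_meas h_antimono)
  moreover have "eventually (\<lambda>i. (\<integral>\<^sup>+ s. h (max K\<^sub>0 (X i)) s \<partial>\<mu> n) = tail_integral \<mu> f n (X i))
      sequentially"
    using X unfolding filterlim_at_top
    by (auto simp: tail_h max_absorb2 elim!: allE[of _ K\<^sub>0] eventually_mono)
  ultimately show "(\<lambda>i. tail_integral \<mu> f n (X i)) \<longlonglongrightarrow> 0"
    by (simp add: tendsto_cong)
qed

lemma limsup_tendsto_0_if_SUP_shift_tendsto_0:
  fixes T :: "nat \<Rightarrow> real \<Rightarrow> ennreal"
  assumes "((\<lambda>K. SUP n. T (n + N) K) \<longlongrightarrow> 0) at_top"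
  shows "((\<lambda>K. limsup (\<lambda>n. T n K)) \<longlongrightarrow> 0) at_top"
proof (rule tendsto_sandwich[OF _ _ tendsto_const assms])
  show "eventually (\<lambda>K. limsup (\<lambda>n. T n K) \<le> (SUP n. T (n + N) K)) at_top"
  proof (intro always_eventually allI)
    fix K
    have "limsup (\<lambda>n. T n K) = limsup (\<lambda>n. T (n + N) K)"
      by (rule limsup_shift_k[symmetric])
    also have "\<dots> \<le> (SUP n. T (n + N) K)"
      by (intro Limsup_bounded always_eventually) (auto intro: SUP_upper)
    finally show "limsup (\<lambda>n. T n K) \<le> (SUP n. T (n + N) K)" .
  qed
qed simp

lemma SUP_shift_tendsto_0_if_limsup_tendsto_0:
  fixes T :: "nat \<Rightarrow> real \<Rightarrow> ennreal"
  assumes antimono: "\<And>n K K'. K \<le> K' \<Longrightarrow> T n K' \<le> T n K"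
    and vanish: "\<And>n. n \<ge> N \<Longrightarrow> (T n \<longlongrightarrow> 0) at_top"
    and limsup: "((\<lambda>K. limsup (\<lambda>n. T n K)) \<longlongrightarrow> 0) at_top"
  shows "((\<lambda>K. SUP n. T (n + N) K) \<longlongrightarrow> 0) at_top"
proof (rule order_tendstoI)
  fix e :: ennreal
  assume "0 < e"
  then obtain d :: ennreal where d: "0 < d" "d < e"
    using dense by blast
  obtain K\<^sub>1 where "limsup (\<lambda>n. T n K\<^sub>1) < d"
    using order_tendstoD(2)[OF limsup d(1)] by (auto simp: eventually_at_top_linorder)
  then have "eventually (\<lambda>n. T n K\<^sub>1 < d) sequentially"
    by (rule Limsup_lessD)
  then obtain M where M: "\<And>n. n \<ge> M \<Longrightarrow> T n K\<^sub>1 < d"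
    by (auto simp: eventually_sequentially)
  have "eventually (\<lambda>K. \<forall>n\<in>{N..<M}. T n K < d) at_top"
    using order_tendstoD(2)[OF vanish d(1)] by (intro eventually_ball_finite) auto
  then show "eventually (\<lambda>K. (SUP n. T (n + N) K) < e) at_top"
    using eventually_ge_at_top[of K\<^sub>1]
  proof eventually_elim
    case (elim K)
    have "T (n + N) K \<le> d" for n
    proof (cases "n + N \<ge> M")
      case True
      then show ?thesis
        using M antimono[OF elim(2)] by (meson order.strict_implies_order order_trans)
    next
      case False
      then show ?thesis using elim(1) by (auto intro: less_imp_le)
    qed
    then show ?case
      using d(2) by (meson SUP_least order.strict_trans1)
  qed
qed simp

lemma ex_SUP_shift_tendsto_0_iff_limsup_tendsto_0:
  fixes T :: "nat \<Rightarrow> real \<Rightarrow> ennreal"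
  assumes antimono: "\<And>n K K'. K \<le> K' \<Longrightarrow> T n K' \<le> T n K"
    and vanish: "\<And>n K\<^sub>0. T n K\<^sub>0 < \<infinity> \<Longrightarrow> (T n \<longlongrightarrow> 0) at_top"
  shows "(\<exists>N. ((\<lambda>K. SUP n. T (n + N) K) \<longlongrightarrow> 0) at_top)
    \<longleftrightarrow> ((\<lambda>K. limsup (\<lambda>n. T n K)) \<longlongrightarrow> 0) at_top"
proof
  assume "\<exists>N. ((\<lambda>K. SUP n. T (n + N) K) \<longlongrightarrow> 0) at_top"
  then show "((\<lambda>K. limsup (\<lambda>n. T n K)) \<longlongrightarrow> 0) at_top"
    using limsup_tendsto_0_if_SUP_shift_tendsto_0 by blast
next
  assume limsup: "((\<lambda>K. limsup (\<lambda>n. T n K)) \<longlongrightarrow> 0) at_top"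
  obtain K\<^sub>0 where "limsup (\<lambda>n. T n K\<^sub>0) < 1"
    using order_tendstoD(2)[OF limsup zero_less_one] by (auto simp: eventually_at_top_linorder)
  then have "eventually (\<lambda>n. T n K\<^sub>0 < 1) sequentially"
    by (rule Limsup_lessD)
  then obtain N where "\<And>n. n \<ge> N \<Longrightarrow> T n K\<^sub>0 < 1"
    by (auto simp: eventually_sequentially)
  then have "\<And>n. n \<ge> N \<Longrightarrow> (T n \<longlongrightarrow> 0) at_top"
    using vanish less_trans[OF _ ennreal_one_less_top] by (metis infinity_ennreal_def)
  then show "\<exists>N. ((\<lambda>K. SUP n. T (n + N) K) \<longlongrightarrow> 0) at_top"
    using SUP_shift_tendsto_0_if_limsup_tendsto_0[OF antimono _ limsup] by blast
qed

theorem theorem2p2: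
  fixes \<Sigma> :: "'a measure"
    and \<mu> :: "nat \<Rightarrow> 'a measure"
    and f :: "nat \<Rightarrow> 'a \<Rightarrow> ereal"
  assumes sets_\<mu>: "\<And>n. sets (\<mu> n) = sets \<Sigma>"
    and fin: "\<And>n. finite_measure (\<mu> n)"
    and meas: "\<And>n. f n \<in> borel_measurable \<Sigma>"
  shows "(\<exists>N::nat. unif_integrable (\<lambda>n. \<mu> (n + N)) (\<lambda>n. f (n + N)))
         \<longleftrightarrow> asymp_unif_integrable \<mu> f"
proof -
  have "f n \<in> borel_measurable (\<mu> n)" for n
    using measurable_cong_sets[OF sets_\<mu> refl] meas by blast
  then have "(\<exists>N. ((\<lambda>K. SUP n. tail_integral \<mu> f (n + N) K) \<longlongrightarrow> 0) at_top)
      \<longleftrightarrow> ((\<lambda>K. limsup (\<lambda>n. tail_integral \<mu> f n K)) \<longlongrightarrow> 0) at_top"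
    by (intro ex_SUP_shift_tendsto_0_iff_limsup_tendsto_0 tail_integral_antimono)
      (auto intro: tail_integral_tendsto_0)
  then show ?thesis
    by (simp add: unif_integrable_def asymp_unif_integrable_def tail_integral_shift)
qed

end
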